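(* Let $\Lambda$ be a hypergraph on a finite vertex set $V$ (given as a map $\Lambda:\mathcal{P}(V)\to\mathbb{Z}^+$, $\Lambda(A)$ being the number of hyperedges over $A$), and let $A\subseteq V$. Then $A$ is essential for $\Lambda$ if and only if $\Lambda(A)=1$ and $|A\setminus V^*(\Lambda\mathbb{1}_{\{A\}^C})|=1$.
   Context: $\Lambda\mathbb{1}_{\{A\}^C}$ denotes the hypergraph obtained from $\Lambda$ by removing all hyperedges over the set $A$ (i.e. setting the multiplicity of $A$ to $0$). Hyperedges over singleton sets are called patches. Identifiable vertices: repeatedly pick a vertex carrying a patch, delete that vertex and the patch, and collapse every other hyperedge containing it onto its remaining vertices; continue until no patches remain. The set of removed vertices does not depend on the order of choices and is denoted $V^*(\Lambda)$. A set $A\subseteq V$ is called essential for $\Lambda$ if $\Lambda(A)=1$ and $V^*(\Lambda\mathbb{1}_{\{A\}^C})\neq V^*(\Lambda)$. *)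

theory Defs
  imports Main
begin

text \<open>A state of the peeling process is the set S of vertices removed so far;
  the current (collapsed) hypergraph has, for every original hyperedge B,
  the hyperedge B - S. A patch in the current hypergraph is a hyperedge
  whose current vertex set is a singleton.\<close>

definition hypergraph :: "'a set \<Rightarrow> ('a set \<Rightarrow> nat) \<Rightarrow> bool" where
  "hypergraph V \<Lambda> \<longleftrightarrow> finite V \<and> (\<forall>B. 0 < \<Lambda> B \<longrightarrow> B \<subseteq> V)"

definition carries_patch :: "('a set \<Rightarrow> nat) \<Rightarrow> 'a set \<Rightarrow> 'a \<Rightarrow> bool" where
  "carries_patch \<Lambda> S v \<longleftrightarrow> (\<exists>B. 0 < \<Lambda> B \<and> B - S = {v})"

definition peel_step :: "('a set \<Rightarrow> nat) \<Rightarrow> 'a set \<Rightarrow> 'a set \<Rightarrow> bool" where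
  "peel_step \<Lambda> S S' \<longleftrightarrow> (\<exists>v. carries_patch \<Lambda> S v \<and> S' = insert v S)"

definition peel_terminal :: "('a set \<Rightarrow> nat) \<Rightarrow> 'a set \<Rightarrow> bool" where
  "peel_terminal \<Lambda> S \<longleftrightarrow> \<not> (\<exists>v. carries_patch \<Lambda> S v)"

text \<open>V*(Lambda): the set of removed vertices when the process stops
  (well defined by the order independence of the process).\<close>
definition Vstar :: "('a set \<Rightarrow> nat) \<Rightarrow> 'a set" where
  "Vstar \<Lambda> = (THE S. (peel_step \<Lambda>)\<^sup>*\<^sup>* {} S \<and> peel_terminal \<Lambda> S)"

definition essential :: "('a set \<Rightarrow> nat) \<Rightarrow> 'a set \<Rightarrow> bool" where
  "essential \<Lambda> A \<longleftrightarrow> \<Lambda> A = 1 \<and> Vstar (\<Lambda>(A := 0)) \<noteq> Vstar \<Lambda>"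

end

theory Submission
  imports Defs
begin

text \<open>Any run of the peeling process stays inside every terminal state containing
  its starting state: a patch B - S = {v} with v outside such a state T would give
  the patch B - T = {v} at T. Hence a terminal state reachable from the empty set
  is unique, and it is V*. Deleting the hyperedge A only removes patches, so V* of
  the reduced hypergraph is reachable for \<Lambda>; V* changes exactly when this state
  still carries a patch for \<Lambda>, and the only candidate is the restored hyperedge
  A, which is a patch iff exactly one vertex of A survives.\<close>

lemma peel_reachable_subset_terminal:
  assumes "(peel_step \<Lambda>)\<^sup>*\<^sup>* S\<^sub>0 S" "S\<^sub>0 \<subseteq> T" "peel_terminal \<Lambda> T"
  shows "S \<subseteq> T"
  using assms(1)
proof (induction rule: rtranclp_induct)
  case base
  then show ?case using assms(2) .
next
  case (step S S')
  then obtain v B where "0 < \<Lambda> B" "B - S = {v}" "S' = insert v S"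
    unfolding peel_step_def carries_patch_def by blast
  moreover have "v \<in> T"
  proof (rule ccontr)
    assume "v \<notin> T"
    with \<open>B - S = {v}\<close> step.IH have "B - T = {v}" by blast
    with \<open>0 < \<Lambda> B\<close> assms(3) show False
      unfolding peel_terminal_def carries_patch_def by blast
  qed
  ultimately show ?case using step.IH by blast
qed

lemma peel_reachable_subset_vertices:
  assumes "hypergraph V \<Lambda>" "(peel_step \<Lambda>)\<^sup>*\<^sup>* {} S"
  shows "S \<subseteq> V"
  using assms(2)
proof (induction rule: rtranclp_induct)
  case (step S S')
  then obtain v B where "0 < \<Lambda> B" "B - S = {v}" "S' = insert v S"
    unfolding peel_step_def carries_patch_def by blast
  with assms(1) step.IH show ?case
    unfolding hypergraph_def by blast
qed simp

lemma peel_terminal_reachable_exists: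
  assumes "hypergraph V \<Lambda>"
  obtains S where "(peel_step \<Lambda>)\<^sup>*\<^sup>* {} S" "peel_terminal \<Lambda> S"
proof -
  let ?R = "{S. (peel_step \<Lambda>)\<^sup>*\<^sup>* {} S}"
  have "?R \<subseteq> Pow V"
    using peel_reachable_subset_vertices[OF assms] by blast
  moreover have "finite V"
    using assms unfolding hypergraph_def by blast
  ultimately have "finite ?R"
    using finite_subset by blast
  moreover have "?R \<noteq> {}" by auto
  ultimately obtain S where S: "S \<in> ?R" and maximal: "\<And>S'. S' \<in> ?R \<Longrightarrow> S \<subseteq> S' \<Longrightarrow> S = S'"
    using finite_has_maximal by metis
  have "peel_terminal \<Lambda> S"
    unfolding peel_terminal_def
  proof
    assume "\<exists>v. carries_patch \<Lambda> S v"
    then obtain v B where "0 < \<Lambda> B" "B - S = {v}"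
      unfolding carries_patch_def by blast
    then have "peel_step \<Lambda> S (insert v S)"
      unfolding peel_step_def carries_patch_def by blast
    with S have "insert v S \<in> ?R" by simp
    then have "S = insert v S" by (rule maximal) blast
    with \<open>B - S = {v}\<close> show False by blast
  qed
  with S that show thesis by blast
qed

lemma Vstar_eqI:
  assumes "(peel_step \<Lambda>)\<^sup>*\<^sup>* {} S" "peel_terminal \<Lambda> S"
  shows "Vstar \<Lambda> = S"
  unfolding Vstar_def
proof (rule the_equality)
  fix S' assume "(peel_step \<Lambda>)\<^sup>*\<^sup>* {} S' \<and> peel_terminal \<Lambda> S'"
  with assms show "S' = S"
    using peel_reachable_subset_terminal[of \<Lambda> "{}"] by blast
qed (use assms in simp)

lemma
  assumes "hypergraph V \<Lambda>"
  shows Vstar_reachable: "(peel_step \<Lambda>)\<^sup>*\<^sup>* {} (Vstar \<Lambda>)"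
    and Vstar_terminal: "peel_terminal \<Lambda> (Vstar \<Lambda>)"
proof -
  obtain S where "(peel_step \<Lambda>)\<^sup>*\<^sup>* {} S" "peel_terminal \<Lambda> S"
    using peel_terminal_reachable_exists[OF assms] .
  moreover from this have "Vstar \<Lambda> = S" by (rule Vstar_eqI)
  ultimately show "(peel_step \<Lambda>)\<^sup>*\<^sup>* {} (Vstar \<Lambda>)" "peel_terminal \<Lambda> (Vstar \<Lambda>)"
    by simp_all
qed

lemma Vstar_eq_iff_terminal:
  assumes "hypergraph V \<Lambda>" "(peel_step \<Lambda>)\<^sup>*\<^sup>* {} S"
  shows "Vstar \<Lambda> = S \<longleftrightarrow> peel_terminal \<Lambda> S"
  using Vstar_eqI[OF assms(2)] Vstar_terminal[OF assms(1)] by blast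

lemma peel_reachable_mono:
  assumes "\<And>B. 0 < \<Lambda> B \<Longrightarrow> 0 < \<Lambda>' B" "(peel_step \<Lambda>)\<^sup>*\<^sup>* S\<^sub>0 S"
  shows "(peel_step \<Lambda>')\<^sup>*\<^sup>* S\<^sub>0 S"
proof -
  have "peel_step \<Lambda> \<le> peel_step \<Lambda>'"
    using assms(1) unfolding peel_step_def carries_patch_def by blast
  with assms(2) show ?thesis
    using rtranclp_mono by blast
qed

lemma hypergraph_remove_edge:
  "hypergraph V \<Lambda> \<Longrightarrow> hypergraph V (\<Lambda>(A := 0))"
  unfolding hypergraph_def by simp

lemma carries_patch_fun_upd_zero_iff:
  "carries_patch \<Lambda> S v \<longleftrightarrow> carries_patch (\<Lambda>(A := 0)) S v \<or> 0 < \<Lambda> A \<and> A - S = {v}"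
  unfolding carries_patch_def by (metis fun_upd_apply neq0_conv)

lemma peel_terminal_fun_upd_zero_iff:
  "peel_terminal \<Lambda> S \<longleftrightarrow> peel_terminal (\<Lambda>(A := 0)) S \<and> (0 < \<Lambda> A \<longrightarrow> card (A - S) \<noteq> 1)"
  unfolding peel_terminal_def carries_patch_fun_upd_zero_iff[of \<Lambda> S _ A]
  by (auto simp: card_1_singleton_iff)

theorem proposition4:
  fixes V :: "'a set" and \<Lambda> :: "'a set \<Rightarrow> nat" and A :: "'a set"
  assumes "hypergraph V \<Lambda>" and "A \<subseteq> V"
  shows "essential \<Lambda> A \<longleftrightarrow> \<Lambda> A = 1 \<and> card (A - Vstar (\<Lambda>(A := 0))) = 1"
proof -
  let ?S = "Vstar (\<Lambda>(A := 0))"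
  have reduced: "hypergraph V (\<Lambda>(A := 0))"
    using assms(1) by (rule hypergraph_remove_edge)
  have "(peel_step \<Lambda>)\<^sup>*\<^sup>* {} ?S"
    by (rule peel_reachable_mono[OF _ Vstar_reachable[OF reduced]]) (simp split: if_splits)
  then have "Vstar \<Lambda> = ?S \<longleftrightarrow> peel_terminal \<Lambda> ?S"
    by (rule Vstar_eq_iff_terminal[OF assms(1)])
  also have "\<dots> \<longleftrightarrow> (0 < \<Lambda> A \<longrightarrow> card (A - ?S) \<noteq> 1)"
    using Vstar_terminal[OF reduced] by (simp add: peel_terminal_fun_upd_zero_iff[of \<Lambda> ?S A])
  finally show ?thesis
    unfolding essential_def by auto
qed

end
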